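(* Let $\mathbf{p}$ be a finite list of distinct predicate constants, and for each $p\in\mathbf{p}$ let $u_p$, $\widehat u_p$ be predicate variables of the arity of $p$, with lists $\mathbf{u}$, $\widehat{\mathbf{u}}$. Then $\big(\neg(\mathbf{u}=\mathbf{p})\big)_{\Sigma 2}$ is logically equivalent to $(\mathbf{u},\widehat{\mathbf{u}})<(\mathbf{p},\neg\mathbf{p})$.
   Context: $\neg\mathbf{p}$ is the list of predicate expressions $\lambda\mathbf{x}\neg p(\mathbf{x})$, $p\in\mathbf{p}$. For predicates/predicate expressions of equal arity, $p\le q$ is $\forall\mathbf{x}(p(\mathbf{x})\to q(\mathbf{x}))$; for tuples $\le$ is componentwise conjunction and $\mathbf{a}<\mathbf{b}$ is $(\mathbf{a}\le\mathbf{b})\land\neg(\mathbf{b}\le\mathbf{a})$; $u_p$ is matched with $p$ and $\widehat u_p$ with $\lambda\mathbf{x}\neg p(\mathbf{x})$. $\mathbf{u}=\mathbf{p}$ is $\bigwedge_{p\in\mathbf{p}}\forall\mathbf{x}(u_p(\mathbf{x})\leftrightarrow p(\mathbf{x}))$. For a formula $F$, $F_{\Sigma 2}$ is the result of substituting in $F$, for each $p\in\mathbf{p}$, the predicate expression $\lambda\mathbf{x}\Big(\big(((\mathbf{u},\widehat{\mathbf{u}})\le(\mathbf{p},\neg\mathbf{p}))\land\neg u_p(\mathbf{x})\land\neg\widehat u_p(\mathbf{x})\big)\leftrightarrow\neg p(\mathbf{x})\Big)$ for $u_p$ (simultaneously for all $p$; the variables $u_p,\widehat u_p$ occurring inside these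 expressions are not further substituted). *)

theory Defs
  imports Main
begin

(* An interpretation of
   a list of predicates indexed by ps is a function 'i => 'a list => bool;
   only argument tuples of length ar q matter. *)

type_synonym ('i,'a) interp = "'i \<Rightarrow> 'a list \<Rightarrow> bool"

definition pred_le :: "nat \<Rightarrow> ('a list \<Rightarrow> bool) \<Rightarrow> ('a list \<Rightarrow> bool) \<Rightarrow> bool" where
  "pred_le n f g \<longleftrightarrow> (\<forall>xs. length xs = n \<longrightarrow> f xs \<longrightarrow> g xs)"

definition neg_interp :: "('i,'a) interp \<Rightarrow> ('i,'a) interp" where
  "neg_interp p = (\<lambda>q xs. \<not> p q xs)"

definition pair_le :: "'i list \<Rightarrow> ('i \<Rightarrow> nat) \<Rightarrow> ('i,'a) interp \<Rightarrow> ('i,'a) interp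
    \<Rightarrow> ('i,'a) interp \<Rightarrow> ('i,'a) interp \<Rightarrow> bool" where
  "pair_le ps ar a b c d \<longleftrightarrow>
     (\<forall>q\<in>set ps. pred_le (ar q) (a q) (c q)) \<and> (\<forall>q\<in>set ps. pred_le (ar q) (b q) (d q))"

definition pair_less :: "'i list \<Rightarrow> ('i \<Rightarrow> nat) \<Rightarrow> ('i,'a) interp \<Rightarrow> ('i,'a) interp
    \<Rightarrow> ('i,'a) interp \<Rightarrow> ('i,'a) interp \<Rightarrow> bool" where
  "pair_less ps ar a b c d \<longleftrightarrow> pair_le ps ar a b c d \<and> \<not> pair_le ps ar c d a b"

definition interp_eq :: "'i list \<Rightarrow> ('i \<Rightarrow> nat) \<Rightarrow> ('i,'a) interp \<Rightarrow> ('i,'a) interp \<Rightarrow> bool" where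
  "interp_eq ps ar u p \<longleftrightarrow> (\<forall>q\<in>set ps. \<forall>xs. length xs = ar q \<longrightarrow> (u q xs \<longleftrightarrow> p q xs))"

(* The predicate expression substituted for u_q in the \<Sigma>2 transformation:
   \<lambda>x (((u,uh) <= (p, \<not>p)) \<and> \<not>u_q x \<and> \<not>uh_q x) <-> \<not> q x *)
definition sigma2_expr :: "'i list \<Rightarrow> ('i \<Rightarrow> nat) \<Rightarrow> ('i,'a) interp \<Rightarrow> ('i,'a) interp
    \<Rightarrow> ('i,'a) interp \<Rightarrow> ('i,'a) interp" where
  "sigma2_expr ps ar u uh p =
     (\<lambda>q xs. ((pair_le ps ar u uh p (neg_interp p) \<and> \<not> u q xs \<and> \<not> uh q xs) \<longleftrightarrow> \<not> p q xs))"

(* A formula F (in the variables u, uh and the constants p) is represented by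
   its truth value as a function of the interpretations of u, uh, p.
   F_\<Sigma>2 is F with u_q replaced (simultaneously) by sigma2_expr; the u, uh
   inside the expression are not further substituted. *)
definition Sigma2 :: "'i list \<Rightarrow> ('i \<Rightarrow> nat)
    \<Rightarrow> (('i,'a) interp \<Rightarrow> ('i,'a) interp \<Rightarrow> ('i,'a) interp \<Rightarrow> bool)
    \<Rightarrow> ('i,'a) interp \<Rightarrow> ('i,'a) interp \<Rightarrow> ('i,'a) interp \<Rightarrow> bool" where
  "Sigma2 ps ar F u uh p = F (sigma2_expr ps ar u uh p) uh p"

end

theory Submission
  imports Defs
begin

text \<open>If \<open>(u, uh) \<le> (p, \<not>p)\<close> fails, the substituted expression collapses to \<open>p\<close> itself, so
  \<open>u = p\<close> becomes true after substitution. If it holds, the expression reads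
  \<open>u\<^sub>q x \<or> uh\<^sub>q x \<longleftrightarrow> p\<^sub>q x\<close>; given \<open>u \<le> p\<close> and \<open>uh \<le> \<not>p\<close>, it agrees with \<open>p\<close> everywhere exactly
  when \<open>(p, \<not>p) \<le> (u, uh)\<close>.\<close>

lemma sigma2_expr_if_not_le:
  assumes "\<not> pair_le ps ar u uh p (neg_interp p)"
  shows "sigma2_expr ps ar u uh p = p"
  using assms unfolding sigma2_expr_def by auto

lemma sigma2_expr_if_le:
  assumes "pair_le ps ar u uh p (neg_interp p)"
  shows "sigma2_expr ps ar u uh p = (\<lambda>q xs. u q xs \<or> uh q xs \<longleftrightarrow> p q xs)"
  using assms unfolding sigma2_expr_def by auto

lemma interp_eq_join_iff_le:
  assumes "pair_le ps ar u uh p (neg_interp p)"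
  shows "interp_eq ps ar (\<lambda>q xs. u q xs \<or> uh q xs \<longleftrightarrow> p q xs) p
           \<longleftrightarrow> pair_le ps ar p (neg_interp p) u uh"
  using assms unfolding interp_eq_def pair_le_def pred_le_def neg_interp_def by blast

theorem lemma6:
  fixes ps :: "'i list" and ar :: "'i \<Rightarrow> nat"
    and u uh p :: "('i, 'a) interp"
  assumes "distinct ps"
  shows "Sigma2 ps ar (\<lambda>u uh p. \<not> interp_eq ps ar u p) u uh p
           \<longleftrightarrow> pair_less ps ar u uh p (neg_interp p)"
proof (cases "pair_le ps ar u uh p (neg_interp p)")
  case True
  then show ?thesis
    by (simp add: Sigma2_def pair_less_def sigma2_expr_if_le interp_eq_join_iff_le)
next
  case False
  then show ?thesis
    by (simp add: Sigma2_def pair_less_def sigma2_expr_if_not_le interp_eq_def)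
qed

end
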